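(* Let $n\ge 1$ with $n\not\equiv 1 \pmod 3$, and consider peg solitaire on the triangular board $T_n$. If a sequence of jumps on $T_n$ ends in a board position with exactly one peg, then none of the board positions occurring in this sequence (including the initial one) has $120^\circ$ rotational symmetry, i.e., no such position $P$ satisfies $P(r(h))=P(h)$ for every hole $h$, where $r(x,y)=(y-x,\,n-1-x)$.
   Context: The triangular board $T_n$ is the set of holes with integer skew coordinates $(x,y)$ satisfying $0\le x\le y\le n-1$. A board position $P$ assigns to each hole $h$ either a peg or no peg. A jump takes a peg at hole $p$, jumps it over a peg at an adjacent hole $p+d$ into an empty hole $p+2d$, where $d$ is one of the six directions $(\pm1,0)$, $(0,\pm1)$, $(1,1)$, $(-1,-1)$ and all three holes lie in $T_n$; the jumped-over peg is removed. The map $r(x,y)=(y-x,n-1-x)$ is the counterclockwise rotation of $T_n$ by $120^\circ$ in skew coordinates; a position has $120^\circ$ rotational symmetry if it is invariant under $r$. *)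

theory Defs
  imports Main
begin

type_synonym hole = "int \<times> int"
type_synonym position = "hole \<Rightarrow> bool"  (* True = peg *)

definition board :: "nat \<Rightarrow> hole set" where
  "board n = {(x, y). 0 \<le> x \<and> x \<le> y \<and> y \<le> int n - 1}"

definition is_position :: "nat \<Rightarrow> position \<Rightarrow> bool" where
  "is_position n P \<longleftrightarrow> (\<forall>h. P h \<longrightarrow> h \<in> board n)"

definition directions :: "hole set" where
  "directions = {(1,0), (-1,0), (0,1), (0,-1), (1,1), (-1,-1)}"

definition hadd :: "hole \<Rightarrow> hole \<Rightarrow> hole" where
  "hadd a b = (fst a + fst b, snd a + snd b)"

definition hscale :: "int \<Rightarrow> hole \<Rightarrow> hole" where
  "hscale k d = (k * fst d, k * snd d)"

definition jump :: "nat \<Rightarrow> position \<Rightarrow> position \<Rightarrow> bool" where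
  "jump n P Q \<longleftrightarrow> (\<exists>p d. d \<in> directions \<and>
      p \<in> board n \<and> hadd p d \<in> board n \<and> hadd p (hscale 2 d) \<in> board n \<and>
      P p \<and> P (hadd p d) \<and> \<not> P (hadd p (hscale 2 d)) \<and>
      Q = P(p := False, hadd p d := False, hadd p (hscale 2 d) := True))"

definition rot :: "nat \<Rightarrow> hole \<Rightarrow> hole" where
  "rot n h = (snd h - fst h, int n - 1 - fst h)"

definition rot_symmetric :: "nat \<Rightarrow> position \<Rightarrow> bool" where
  "rot_symmetric n P \<longleftrightarrow> (\<forall>h \<in> board n. P (rot n h) = P h)"

definition jump_sequence :: "nat \<Rightarrow> position list \<Rightarrow> bool" where
  "jump_sequence n Ps \<longleftrightarrow> Ps \<noteq> [] \<and> is_position n (hd Ps) \<and>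
     (\<forall>i. Suc i < length Ps \<longrightarrow> jump n (Ps ! i) (Ps ! Suc i))"

definition one_peg :: "nat \<Rightarrow> position \<Rightarrow> bool" where
  "one_peg n P \<longleftrightarrow> card {h \<in> board n. P h} = 1"

end

theory Submission
  imports Defs
begin

text \<open>Colour the hole \<open>(x, y)\<close> with \<open>(x + y) mod 3\<close>. The three holes involved in a jump carry
  three different colours, so every jump flips the parity of the number of pegs of each colour,
  and "all three colour counts have the same parity" is invariant along a jump sequence.
  A single peg violates this invariant. The rotation \<open>r\<close> shifts colours by \<open>n - 1\<close>, which is a
  nonzero residue modulo 3 when \<open>n mod 3 \<noteq> 1\<close>; hence a symmetric position has equally many pegs
  of each colour and satisfies the invariant.\<close>

definition colour :: "hole \<Rightarrow> int" where
  "colour h = (fst h + snd h) mod 3"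

definition colour_count :: "nat \<Rightarrow> position \<Rightarrow> int \<Rightarrow> nat" where
  "colour_count n P c = card {h \<in> board n. P h \<and> colour h = c}"

definition equal_colour_parity :: "nat \<Rightarrow> position \<Rightarrow> bool" where
  "equal_colour_parity n P \<longleftrightarrow>
     (\<forall>c \<in> {0, 1, 2}. \<forall>c' \<in> {0, 1, 2}. even (colour_count n P c) = even (colour_count n P c'))"

lemma finite_board: "finite (board n)"
proof -
  have "board n \<subseteq> {0..int n - 1} \<times> {0..int n - 1}"
    by (auto simp: board_def)
  then show ?thesis
    by (rule finite_subset) auto
qed

lemma colour_range: "colour h \<in> {0, 1, 2}"
  unfolding colour_def by auto

lemma colour_hadd_hscale: "colour (hadd p (hscale k d)) = (colour p + k * (fst d + snd d)) mod 3"
proof -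
  have "colour (hadd p (hscale k d)) = (fst p + snd p + k * (fst d + snd d)) mod 3"
    by (simp add: colour_def hadd_def hscale_def algebra_simps)
  then show ?thesis
    unfolding colour_def by (simp add: mod_add_left_eq)
qed

lemma colour_rot: "colour (rot n h) = (colour h + int n - 1) mod 3"
proof -
  have "snd h - fst h + (int n - 1 - fst h) = fst h + snd h + (int n - 1) + 3 * (- fst h)"
    by simp
  then have "colour (rot n h) = (fst h + snd h + (int n - 1)) mod 3"
    unfolding colour_def rot_def by (simp only: fst_conv snd_conv mod_mult_self2)
  then show ?thesis
    unfolding colour_def by (metis add_diff_eq mod_add_left_eq)
qed

lemma rot_in_board: "h \<in> board n \<Longrightarrow> rot n h \<in> board n"
  by (auto simp: board_def rot_def)

lemma inj_on_rot: "inj_on (rot n) A"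
  by (auto simp: inj_on_def rot_def prod_eq_iff)

lemma direction_sum_not_dvd_3: "d \<in> directions \<Longrightarrow> \<not> 3 dvd (fst d + snd d)"
  by (auto simp: directions_def)

lemma even_card_jump_update_iff:
  assumes "finite B" "a \<in> B" "b \<in> B" "e \<in> B" "P a" "P b" "\<not> P e"
    and "f a \<noteq> f b" "f a \<noteq> f e" "f b \<noteq> f e" "c \<in> {f a, f b, f e}"
  shows "even (card {h \<in> B. (P(a := False, b := False, e := True)) h \<and> f h = c})
     \<longleftrightarrow> odd (card {h \<in> B. P h \<and> f h = c})"
proof -
  let ?S = "{h \<in> B. P h \<and> f h = c}"
  have "finite ?S"
    using assms(1) by simp
  consider "f a = c" | "f b = c" | "f e = c"
    using assms(11) by blast
  then show ?thesis
  proof cases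
    case 1
    then have "a \<in> ?S" and "card ?S > 0"
      using assms \<open>finite ?S\<close> card_gt_0_iff by blast+
    moreover have "{h \<in> B. (P(a := False, b := False, e := True)) h \<and> f h = c} = ?S - {a}"
      using 1 assms by auto
    ultimately show ?thesis
      by (simp add: card_Diff_singleton)
  next
    case 2
    then have "b \<in> ?S" and "card ?S > 0"
      using assms \<open>finite ?S\<close> card_gt_0_iff by blast+
    moreover have "{h \<in> B. (P(a := False, b := False, e := True)) h \<and> f h = c} = ?S - {b}"
      using 2 assms by auto
    ultimately show ?thesis
      by (simp add: card_Diff_singleton)
  next
    case 3
    then have "{h \<in> B. (P(a := False, b := False, e := True)) h \<and> f h = c} = insert e ?S"
      using assms by auto
    moreover have "e \<notin> ?S"
      using assms(7) by simp
    ultimately show ?thesis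
      using \<open>finite ?S\<close> by simp
  qed
qed

lemma jump_flips_colour_parity:
  assumes "jump n P Q" "c \<in> {0, 1, 2}"
  shows "even (colour_count n Q c) \<longleftrightarrow> odd (colour_count n P c)"
proof -
  obtain p d where d: "d \<in> directions"
    and in_board: "p \<in> board n" "hadd p d \<in> board n" "hadd p (hscale 2 d) \<in> board n"
    and pegs: "P p" "P (hadd p d)" "\<not> P (hadd p (hscale 2 d))"
    and Q: "Q = P(p := False, hadd p d := False, hadd p (hscale 2 d) := True)"
    using assms(1) unfolding jump_def by blast
  have "hadd p d = hadd p (hscale 1 d)"
    by (simp add: hscale_def)
  then have colours: "colour (hadd p d) = (colour p + (fst d + snd d)) mod 3"
    "colour (hadd p (hscale 2 d)) = (colour p + 2 * (fst d + snd d)) mod 3"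
    using colour_hadd_hscale by simp_all
  have "colour p \<in> {0, 1, 2}" "\<not> 3 dvd (fst d + snd d)"
    using colour_range direction_sum_not_dvd_3[OF d] by simp_all
  then have distinct: "colour p \<noteq> colour (hadd p d)" "colour p \<noteq> colour (hadd p (hscale 2 d))"
      "colour (hadd p d) \<noteq> colour (hadd p (hscale 2 d))"
    unfolding colours by presburger+
  then have "c \<in> {colour p, colour (hadd p d), colour (hadd p (hscale 2 d))}"
    using assms(2) colour_range[of p] colour_range[of "hadd p d"]
      colour_range[of "hadd p (hscale 2 d)"] by auto
  then show ?thesis
    unfolding colour_count_def Q
    using even_card_jump_update_iff[OF finite_board in_board pegs distinct] by blast
qed

lemma jump_preserves_equal_colour_parity:
  "jump n P Q \<Longrightarrow> equal_colour_parity n Q = equal_colour_parity n P"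
  unfolding equal_colour_parity_def using jump_flips_colour_parity by blast

lemma jump_sequence_invariant:
  assumes "jump_sequence n Ps" and "\<And>P Q. jump n P Q \<Longrightarrow> I Q = I P" and "P \<in> set Ps"
  shows "I P = I (last Ps)"
proof -
  have "Ps \<noteq> []" and jumps: "\<And>i. Suc i < length Ps \<Longrightarrow> jump n (Ps ! i) (Ps ! Suc i)"
    using assms(1) unfolding jump_sequence_def by auto
  have from_head: "i < length Ps \<Longrightarrow> I (Ps ! i) = I (Ps ! 0)" for i
    by (induction i) (use jumps assms(2) in fastforce)+
  obtain i where "i < length Ps" "P = Ps ! i"
    using assms(3) by (metis in_set_conv_nth)
  then show ?thesis
    using from_head[of i] from_head[of "length Ps - 1"] \<open>Ps \<noteq> []\<close> by (simp add: last_conv_nth)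
qed

lemma one_peg_not_equal_colour_parity:
  assumes "one_peg n P"
  shows "\<not> equal_colour_parity n P"
proof -
  obtain h0 where "{h \<in> board n. P h} = {h0}"
    using assms unfolding one_peg_def by (meson card_1_singletonE)
  then have "{h \<in> board n. P h \<and> colour h = c} = (if colour h0 = c then {h0} else {})" for c
    by auto
  then have "colour_count n P c = (if colour h0 = c then 1 else 0)" for c
    unfolding colour_count_def by simp
  then show ?thesis
    using colour_range[of h0] unfolding equal_colour_parity_def by auto
qed

lemma rot_symmetric_colour_count_le:
  assumes "rot_symmetric n P"
  shows "colour_count n P c \<le> colour_count n P ((c + int n - 1) mod 3)"
proof -
  have "rot n ` {h \<in> board n. P h \<and> colour h = c}
      \<subseteq> {h \<in> board n. P h \<and> colour h = (c + int n - 1) mod 3}"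
    using assms by (auto simp: rot_symmetric_def rot_in_board colour_rot)
  then show ?thesis
    unfolding colour_count_def
    by (intro card_inj_on_le[OF inj_on_rot]) (auto intro: finite_subset[OF _ finite_board])
qed

lemma rot_symmetric_equal_colour_counts:
  assumes "rot_symmetric n P" and "n mod 3 \<noteq> 1"
  shows "colour_count n P 0 = colour_count n P 1 \<and> colour_count n P 1 = colour_count n P 2"
proof -
  note le = rot_symmetric_colour_count_le[OF assms(1)]
  have "(int n - 1) mod 3 = 1 \<or> (int n - 1) mod 3 = 2"
    using assms(2) by presburger
  then consider "(int n - 1) mod 3 = 1" | "(int n - 1) mod 3 = 2"
    by blast
  then show ?thesis
  proof cases
    case 1
    then have "(0 + int n - 1) mod 3 = 1" "(1 + int n - 1) mod 3 = 2" "(2 + int n - 1) mod 3 = 0"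
      by presburger+
    then show ?thesis
      using le[of 0] le[of 1] le[of 2] by simp
  next
    case 2
    then have "(0 + int n - 1) mod 3 = 2" "(1 + int n - 1) mod 3 = 0" "(2 + int n - 1) mod 3 = 1"
      by presburger+
    then show ?thesis
      using le[of 0] le[of 1] le[of 2] by simp
  qed
qed

theorem theorem2p3:
  fixes n :: nat and Ps :: "position list"
  assumes "n \<ge> 1" and "n mod 3 \<noteq> 1"
    and "jump_sequence n Ps"
    and "one_peg n (last Ps)"
  shows "\<forall>P \<in> set Ps. \<not> rot_symmetric n P"
proof (intro ballI notI)
  fix P
  assume "P \<in> set Ps" and "rot_symmetric n P"
  then have "equal_colour_parity n P"
    using rot_symmetric_equal_colour_counts[OF _ assms(2)]
    unfolding equal_colour_parity_def by auto
  moreover have "equal_colour_parity n P = equal_colour_parity n (last Ps)"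
    using jump_sequence_invariant[OF assms(3) jump_preserves_equal_colour_parity \<open>P \<in> set Ps\<close>] .
  ultimately show False
    using one_peg_not_equal_colour_parity[OF assms(4)] by simp
qed

end
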